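(* Let $G=(L,R,E)$ be a bipartite graph, $f:2^E\to\mathbb{R}_{\ge0}$ non-negative, monotonically non-decreasing and submodular, $p\in(0,1)$, and let $M$ be the set produced by $\mathrm{SIMULATE2}$ (see context). Then $\mathbb{E}[f(M)]\ge\frac p3\cdot\mathrm{OPT}$, where $\mathrm{OPT}=\max\{f(T):T\subseteq E\text{ a matching}\}$.
   Context: $f_M(e)=f(M\cup\{e\})-f(M)$. $\mathrm{SIMULATE2}$: start with $M=N=\emptyset$ and a working copy of $E$. While there is an edge $e^*=(\ell^*,r^* )$ in the working edge set such that $M\cup\{e^*\}$ is a matching, take such an edge maximizing $f_M(e^* )$ (fixed tie-breaking); flip an independent coin with head probability $p$; on heads add $e^*$ to $M$, otherwise add $e^*$ to $N$; then remove all edges incident to $\ell^*$ from the working edge set. Finally let $S$ be the set of edges $(\ell,r)\in N$ that are the only edge of $N$ incident to $r$. *)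

theory Defs
  imports "HOL-Probability.Probability"
begin

definition is_matching :: "('l \<times> 'r) set \<Rightarrow> bool" where
  "is_matching T \<longleftrightarrow>
     (\<forall>e1\<in>T. \<forall>e2\<in>T. e1 \<noteq> e2 \<longrightarrow> fst e1 \<noteq> fst e2 \<and> snd e1 \<noteq> snd e2)"

definition monotone_set_fun :: "('e set \<Rightarrow> real) \<Rightarrow> 'e set \<Rightarrow> bool" where
  "monotone_set_fun f E \<longleftrightarrow> (\<forall>A B. A \<subseteq> B \<and> B \<subseteq> E \<longrightarrow> f A \<le> f B)"

definition submodular :: "('e set \<Rightarrow> real) \<Rightarrow> 'e set \<Rightarrow> bool" where
  "submodular f E \<longleftrightarrow>
     (\<forall>A B. A \<subseteq> E \<and> B \<subseteq> E \<longrightarrow> f (A \<union> B) + f (A \<inter> B) \<le> f A + f B)"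

definition marginal :: "('e set \<Rightarrow> real) \<Rightarrow> 'e set \<Rightarrow> 'e \<Rightarrow> real" where
  "marginal f M e = f (insert e M) - f M"

text \<open>State of SIMULATE2: (M, N, working edge set).  The fixed tie-breaking rule
  is a choice function tb selecting one element from the (nonempty) set of maximisers.\<close>
definition sim2_step ::
  "(('l \<times> 'r) set \<Rightarrow> real) \<Rightarrow> (('l \<times> 'r) set \<Rightarrow> 'l \<times> 'r) \<Rightarrow> real \<Rightarrow>
   ('l \<times> 'r) set \<times> ('l \<times> 'r) set \<times> ('l \<times> 'r) set \<Rightarrow>
   (('l \<times> 'r) set \<times> ('l \<times> 'r) set \<times> ('l \<times> 'r) set) pmf" where
  "sim2_step f tb p s =
     (case s of (M, N, W) \<Rightarrow>
       (let C = {e \<in> W. is_matching (insert e M)} in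
        if C = {} then return_pmf (M, N, W)
        else
          (let e = tb {e \<in> C. \<forall>e'\<in>C. marginal f M e' \<le> marginal f M e};
               W' = W - {e' \<in> W. fst e' = fst e}
           in map_pmf (\<lambda>b. if b then (insert e M, N, W') else (M, insert e N, W'))
                (bernoulli_pmf p))))"

text \<open>Each active step removes at least the chosen edge from the working set, so after
  card E steps the loop has terminated (further steps are the identity).\<close>
definition sim2_run ::
  "('l \<times> 'r) set \<Rightarrow> (('l \<times> 'r) set \<Rightarrow> real) \<Rightarrow> (('l \<times> 'r) set \<Rightarrow> 'l \<times> 'r) \<Rightarrow> real \<Rightarrow>
   (('l \<times> 'r) set \<times> ('l \<times> 'r) set \<times> ('l \<times> 'r) set) pmf" where
  "sim2_run E f tb p =
     ((\<lambda>d. bind_pmf d (sim2_step f tb p)) ^^ card E) (return_pmf ({}, {}, E))"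

definition simulate2_M ::
  "('l \<times> 'r) set \<Rightarrow> (('l \<times> 'r) set \<Rightarrow> real) \<Rightarrow> (('l \<times> 'r) set \<Rightarrow> 'l \<times> 'r) \<Rightarrow> real \<Rightarrow>
   ('l \<times> 'r) set pmf" where
  "simulate2_M E f tb p = map_pmf fst (sim2_run E f tb p)"

definition OPT :: "('l \<times> 'r) set \<Rightarrow> (('l \<times> 'r) set \<Rightarrow> real) \<Rightarrow> real" where
  "OPT E f = Max {f T | T. T \<subseteq> E \<and> is_matching T}"

end

theory Submission
  imports Defs
begin

text \<open>Fix an optimal matching T and let A be the set of its edges that are still candidates,
  i.e. could still be added to M. The potential (1 + 1/p) f(M) + f(M \<union> A) does not decrease in
  expectation: the chosen edge e has the largest marginal gain g among all candidates, so by
  submodularity dropping an edge of A lowers f(M \<union> A) by at most g. If e is accepted (probability p),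
  M gains g and A loses at most the two edges of T sharing an endpoint with e; if e is rejected, A
  loses at most the edge of T at the left endpoint of e. Initially the potential is at least
  f(T) = OPT, and at termination A is empty, so (2 + 1/p) E[f(M)] \<ge> OPT.\<close>

lemma monotone_set_funD:
  assumes "monotone_set_fun f E" "A \<subseteq> B" "B \<subseteq> E"
  shows "f A \<le> f B"
  using assms unfolding monotone_set_fun_def by blast

lemma marginal_nonneg:
  assumes "monotone_set_fun f E" "M \<subseteq> E" "u \<in> E"
  shows "0 \<le> marginal f M u"
  using monotone_set_funD[OF assms(1) subset_insertI[of M u]] assms(2,3)
  by (simp add: marginal_def)

lemma marginal_antimono:
  assumes mono: "monotone_set_fun f E" and sub: "submodular f E"
    and "M \<subseteq> X" "X \<subseteq> E" "u \<in> E"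
  shows "marginal f X u \<le> marginal f M u"
proof (cases "u \<in> X")
  case True
  then show ?thesis
    using marginal_nonneg[OF mono, of M u] assms(3-5) by (simp add: marginal_def insert_absorb)
next
  case False
  have "insert u M \<union> X = insert u X" "insert u M \<inter> X = M" using False assms(3) by auto
  moreover have "insert u M \<subseteq> E" using assms(3-5) by blast
  then have "f (insert u M \<union> X) + f (insert u M \<inter> X) \<le> f (insert u M) + f X"
    using sub assms(4) unfolding submodular_def by blast
  ultimately show ?thesis by (simp add: marginal_def)
qed

lemma submodular_union_le_sum_marginal:
  assumes mono: "monotone_set_fun f E" and sub: "submodular f E"
    and "finite R" "X \<subseteq> E" "R \<subseteq> E"
  shows "f (X \<union> R) \<le> f X + (\<Sum>u\<in>R. marginal f X u)"
  using assms(3,5)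
proof (induction R rule: finite_induct)
  case empty
  then show ?case by simp
next
  case (insert r R)
  have "f (X \<union> insert r R) = f (X \<union> R) + marginal f (X \<union> R) r"
    by (simp add: marginal_def)
  also have "\<dots> \<le> f (X \<union> R) + marginal f X r"
    using marginal_antimono[OF mono sub, of X "X \<union> R" r] insert.prems assms(4) by auto
  also have "\<dots> \<le> f X + (\<Sum>u\<in>insert r R. marginal f X u)"
    using insert by simp
  finally show ?case .
qed

lemma submodular_subset_union_le_card_mult:
  assumes mono: "monotone_set_fun f E" and sub: "submodular f E"
    and "M \<union> A \<subseteq> X \<union> R" "M \<subseteq> X" "X \<union> R \<subseteq> E" "R \<subseteq> A" "finite R"
    and "\<forall>u\<in>A. marginal f M u \<le> g" "0 \<le> g" "card R \<le> k"
  shows "f (M \<union> A) \<le> f X + real k * g"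
proof -
  have "X \<subseteq> E" "R \<subseteq> E" using assms(5) by auto
  have "f (M \<union> A) \<le> f (X \<union> R)" using monotone_set_funD[OF mono assms(3,5)] .
  also have "\<dots> \<le> f X + (\<Sum>u\<in>R. marginal f X u)"
    using submodular_union_le_sum_marginal[OF mono sub assms(7) \<open>X \<subseteq> E\<close> \<open>R \<subseteq> E\<close>] .
  also have "(\<Sum>u\<in>R. marginal f X u) \<le> (\<Sum>u\<in>R. g)"
  proof (rule sum_mono)
    fix u assume "u \<in> R"
    then have "marginal f X u \<le> marginal f M u"
      using marginal_antimono[OF mono sub assms(4) \<open>X \<subseteq> E\<close>] \<open>R \<subseteq> E\<close> by blast
    then show "marginal f X u \<le> g" using \<open>u \<in> R\<close> assms(6,8) by fastforce
  qed
  also have "\<dots> = real (card R) * g" by simp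
  also have "\<dots> \<le> real k * g" using assms(9,10) by (intro mult_right_mono) auto
  finally show ?thesis by simp
qed

lemma card_matching_incident_le:
  assumes "is_matching T" "finite T"
  shows "card {u\<in>T. fst u = x} \<le> 1" and "card {u\<in>T. fst u = x \<or> snd u = y} \<le> 2"
proof -
  have "\<forall>a\<in>{u\<in>T. fst u = x}. \<forall>b\<in>{u\<in>T. fst u = x}. a = b"
    "\<forall>a\<in>{u\<in>T. snd u = y}. \<forall>b\<in>{u\<in>T. snd u = y}. a = b"
    using assms(1) unfolding is_matching_def by blast+
  then have fst_le: "card {u\<in>T. fst u = x} \<le> 1" and snd_le: "card {u\<in>T. snd u = y} \<le> 1"
    using assms(2) by (simp_all add: card_le_Suc0_iff_eq)
  show "card {u\<in>T. fst u = x} \<le> 1" by (fact fst_le)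
  have "{u\<in>T. fst u = x \<or> snd u = y} = {u\<in>T. fst u = x} \<union> {u\<in>T. snd u = y}"
    by blast
  then have "card {u\<in>T. fst u = x \<or> snd u = y} \<le> card {u\<in>T. fst u = x} + card {u\<in>T. snd u = y}"
    by (simp add: card_Un_le)
  then show "card {u\<in>T. fst u = x \<or> snd u = y} \<le> 2" using fst_le snd_le by linarith
qed

lemma is_matching_insert_insert:
  assumes "is_matching (insert u M)" "is_matching (insert e M)" "fst u \<noteq> fst e" "snd u \<noteq> snd e"
  shows "is_matching (insert u (insert e M))"
  using assms unfolding is_matching_def by auto

lemma OPT_attained:
  assumes "finite E"
  obtains T where "T \<subseteq> E" "is_matching T" "f T = OPT E f"
proof -
  let ?V = "{f T | T. T \<subseteq> E \<and> is_matching T}"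
  have "?V \<subseteq> f ` Pow E" by blast
  moreover have "finite (f ` Pow E)" using assms by simp
  ultimately have "finite ?V" by (rule finite_subset)
  moreover have "f {} \<in> ?V" unfolding is_matching_def by blast
  ultimately have "Max ?V \<in> ?V" by (intro Max_in) auto
  then obtain T where "T \<subseteq> E" "is_matching T" "f T = Max ?V" by auto
  then show ?thesis by (intro that) (simp_all add: OPT_def)
qed

definition candidates :: "('l \<times> 'r) set \<times> ('l \<times> 'r) set \<times> ('l \<times> 'r) set \<Rightarrow> ('l \<times> 'r) set" where
  "candidates s = (case s of (M, N, W) \<Rightarrow> {e \<in> W. is_matching (insert e M)})"

definition potential ::
  "(('l \<times> 'r) set \<Rightarrow> real) \<Rightarrow> ('l \<times> 'r) set \<Rightarrow> real \<Rightarrow>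
   ('l \<times> 'r) set \<times> ('l \<times> 'r) set \<times> ('l \<times> 'r) set \<Rightarrow> real" where
  "potential f T a s = a * f (fst s) + f (fst s \<union> (T \<inter> candidates s))"

lemma sim2_step_eq:
  "sim2_step f tb p (M, N, W) =
    (if candidates (M, N, W) = {} then return_pmf (M, N, W)
     else let e = tb {e \<in> candidates (M, N, W).
                        \<forall>e'\<in>candidates (M, N, W). marginal f M e' \<le> marginal f M e}
       in map_pmf (\<lambda>b. if b then (insert e M, N, W - {e'\<in>W. fst e' = fst e})
                             else (M, insert e N, W - {e'\<in>W. fst e' = fst e}))
            (bernoulli_pmf p))"
  unfolding sim2_step_def candidates_def by (simp only: prod.case Let_def)

lemma sim2_step_stop:
  assumes "candidates (M, N, W) = {}"
  shows "sim2_step f tb p (M, N, W) = return_pmf (M, N, W)"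
  using assms by (simp add: sim2_step_eq)

lemma sim2_step_active:
  assumes choice: "\<forall>S. S \<subseteq> E \<and> S \<noteq> {} \<longrightarrow> tb S \<in> S"
    and "W \<subseteq> E" "finite W" "candidates (M, N, W) \<noteq> {}"
  obtains e where "e \<in> candidates (M, N, W)"
    and "\<forall>u\<in>candidates (M, N, W). marginal f M u \<le> marginal f M e"
    and "sim2_step f tb p (M, N, W) =
      map_pmf (\<lambda>b. if b then (insert e M, N, W - {e'\<in>W. fst e' = fst e})
                        else (M, insert e N, W - {e'\<in>W. fst e' = fst e}))
        (bernoulli_pmf p)"
proof -
  define C where "C = candidates (M, N, W)"
  define S where "S = {e \<in> C. \<forall>e'\<in>C. marginal f M e' \<le> marginal f M e}"
  have "finite C" "C \<noteq> {}" using assms(3,4) unfolding C_def candidates_def by auto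
  then have "Max (marginal f M ` C) \<in> marginal f M ` C" by simp
  then obtain x where "x \<in> C" "marginal f M x = Max (marginal f M ` C)" by auto
  then have "x \<in> S" unfolding S_def using \<open>finite C\<close> by simp
  moreover have "S \<subseteq> E" using assms(2) unfolding S_def C_def candidates_def by auto
  ultimately have "tb S \<in> S" using choice by blast
  show ?thesis
  proof (rule that[of "tb S"])
    show "tb S \<in> candidates (M, N, W)"
      and "\<forall>u\<in>candidates (M, N, W). marginal f M u \<le> marginal f M (tb S)"
      using \<open>tb S \<in> S\<close> unfolding S_def C_def by auto
    show "sim2_step f tb p (M, N, W) =
      map_pmf (\<lambda>b. if b then (insert (tb S) M, N, W - {e'\<in>W. fst e' = fst (tb S)})
                        else (M, insert (tb S) N, W - {e'\<in>W. fst e' = fst (tb S)}))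
        (bernoulli_pmf p)"
      using assms(4) unfolding sim2_step_eq S_def C_def Let_def by (simp only: if_False)
  qed
qed

lemma finite_set_pmf_sim2_step: "finite (set_pmf (sim2_step f tb p s))"
  unfolding sim2_step_def Let_def by (auto split: prod.split)

lemma sim2_step_support:
  assumes choice: "\<forall>S. S \<subseteq> E \<and> S \<noteq> {} \<longrightarrow> tb S \<in> S"
    and "finite E" "M \<subseteq> E" "W \<subseteq> E"
    and "(M', N', W') \<in> set_pmf (sim2_step f tb p (M, N, W))"
  shows "M' \<subseteq> E \<and> W' \<subseteq> E \<and>
    (if candidates (M, N, W) = {} then (M', N', W') = (M, N, W) else card W' < card W)"
proof (cases "candidates (M, N, W) = {}")
  case True
  then show ?thesis using assms(3-5) by (simp add: sim2_step_stop)
next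
  case False
  have "finite W" using assms(2,4) finite_subset by blast
  then obtain e where e: "e \<in> candidates (M, N, W)"
    and "\<forall>u\<in>candidates (M, N, W). marginal f M u \<le> marginal f M e"
    and step: "sim2_step f tb p (M, N, W) =
      map_pmf (\<lambda>b. if b then (insert e M, N, W - {e'\<in>W. fst e' = fst e})
                        else (M, insert e N, W - {e'\<in>W. fst e' = fst e}))
        (bernoulli_pmf p)"
    by (rule sim2_step_active[OF choice assms(4) _ False])
  have "e \<in> W" using e unfolding candidates_def by simp
  then have "card (W - {e'\<in>W. fst e' = fst e}) < card W"
    using \<open>finite W\<close> by (intro psubset_card_mono) auto
  then show ?thesis using False assms(3-5) \<open>e \<in> W\<close> unfolding step by auto
qed

lemma expectation_bind_pmf_mono:
  fixes F :: "'a \<Rightarrow> real"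
  assumes "finite (set_pmf d)" "\<And>s. s \<in> set_pmf d \<Longrightarrow> finite (set_pmf (K s))"
    and "\<And>s. s \<in> set_pmf d \<Longrightarrow> F s \<le> measure_pmf.expectation (K s) F"
  shows "measure_pmf.expectation d F \<le> measure_pmf.expectation (bind_pmf d K) F"
proof -
  have "measure_pmf.expectation d F = (\<Sum>s\<in>set_pmf d. pmf d s *\<^sub>R F s)"
    by (rule integral_measure_pmf[OF assms(1)]) auto
  also have "\<dots> \<le> (\<Sum>s\<in>set_pmf d. pmf d s *\<^sub>R measure_pmf.expectation (K s) F)"
    using assms(3) by (intro sum_mono) (simp add: mult_left_mono)
  also have "\<dots> = measure_pmf.expectation (bind_pmf d K) F"
    by (rule pmf_expectation_bind[OF assms(1), symmetric]) (use assms(2) in auto)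
  finally show ?thesis .
qed

definition sim2_iter ::
  "(('l \<times> 'r) set \<Rightarrow> real) \<Rightarrow> (('l \<times> 'r) set \<Rightarrow> 'l \<times> 'r) \<Rightarrow> real \<Rightarrow> nat \<Rightarrow>
   ('l \<times> 'r) set \<times> ('l \<times> 'r) set \<times> ('l \<times> 'r) set \<Rightarrow>
   (('l \<times> 'r) set \<times> ('l \<times> 'r) set \<times> ('l \<times> 'r) set) pmf" where
  "sim2_iter f tb p k s = ((\<lambda>d. bind_pmf d (sim2_step f tb p)) ^^ k) (return_pmf s)"

lemma sim2_iter_0 [simp]: "sim2_iter f tb p 0 s = return_pmf s"
  by (simp add: sim2_iter_def)

lemma sim2_iter_Suc [simp]:
  "sim2_iter f tb p (Suc k) s = bind_pmf (sim2_iter f tb p k s) (sim2_step f tb p)"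
  by (simp add: sim2_iter_def)

lemma sim2_run_eq_iter: "sim2_run E f tb p = sim2_iter f tb p (card E) ({}, {}, E)"
  by (simp add: sim2_run_def sim2_iter_def)

lemma finite_set_pmf_sim2_iter: "finite (set_pmf (sim2_iter f tb p k s))"
  by (induction k) (simp_all add: finite_set_pmf_sim2_step)

lemma sim2_iter_support:
  assumes choice: "\<forall>S. S \<subseteq> E \<and> S \<noteq> {} \<longrightarrow> tb S \<in> S" and "finite E"
  shows "(M, N, W) \<in> set_pmf (sim2_iter f tb p k ({}, {}, E)) \<Longrightarrow>
    M \<subseteq> E \<and> W \<subseteq> E \<and> (card W + k \<le> card E \<or> candidates (M, N, W) = {})"
proof (induction k arbitrary: M N W)
  case 0
  then show ?case by simp
next
  case (Suc k)
  then obtain M0 N0 W0 where prev: "(M0, N0, W0) \<in> set_pmf (sim2_iter f tb p k ({}, {}, E))"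
    and "(M, N, W) \<in> set_pmf (sim2_step f tb p (M0, N0, W0))"
    by auto
  moreover note IH = Suc.IH[OF prev]
  ultimately have "M \<subseteq> E \<and> W \<subseteq> E \<and>
      (if candidates (M0, N0, W0) = {} then (M, N, W) = (M0, N0, W0) else card W < card W0)"
    using sim2_step_support[OF choice assms(2)] by blast
  then show ?case using IH by (auto split: if_splits)
qed

lemma sim2_run_terminated:
  assumes "\<forall>S. S \<subseteq> E \<and> S \<noteq> {} \<longrightarrow> tb S \<in> S" "finite E"
    and "(M, N, W) \<in> set_pmf (sim2_run E f tb p)"
  shows "M \<subseteq> E \<and> candidates (M, N, W) = {}"
proof -
  have "M \<subseteq> E" "W \<subseteq> E" "card W = 0 \<or> candidates (M, N, W) = {}"
    using sim2_iter_support[OF assms(1,2)] assms(3) unfolding sim2_run_eq_iter by fastforce+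
  moreover have "finite W" using \<open>W \<subseteq> E\<close> assms(2) finite_subset by blast
  ultimately show ?thesis unfolding candidates_def by auto
qed

context
  fixes f :: "('l \<times> 'r) set \<Rightarrow> real" and E T :: "('l \<times> 'r) set"
  assumes mono: "monotone_set_fun f E" and sub: "submodular f E" and "finite E"
    and T: "T \<subseteq> E" "is_matching T"
begin

lemma finite_matching: "finite T"
  using T(1) \<open>finite E\<close> finite_subset by blast

lemma potential_loss_rejected:
  assumes "M \<subseteq> E" "W \<subseteq> E" and e: "e \<in> candidates (M, N, W)"
    and max: "\<forall>u\<in>candidates (M, N, W). marginal f M u \<le> marginal f M e"
  shows "f (M \<union> (T \<inter> candidates (M, N, W)))
    \<le> f (M \<union> (T \<inter> candidates (M, N', W - {e'\<in>W. fst e' = fst e}))) + marginal f M e"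
proof -
  define R where "R = {u \<in> T \<inter> candidates (M, N, W). fst u = fst e}"
  have "card R \<le> card {u\<in>T. fst u = fst e}"
    unfolding R_def by (rule card_mono) (use finite_matching in auto)
  then have "card R \<le> 1"
    using card_matching_incident_le(1)[OF T(2) finite_matching, of "fst e"] by linarith
  have "e \<in> E" using e assms(2) unfolding candidates_def by auto
  have "f (M \<union> (T \<inter> candidates (M, N, W)))
      \<le> f (M \<union> (T \<inter> candidates (M, N', W - {e'\<in>W. fst e' = fst e}))) + real 1 * marginal f M e"
  proof (rule submodular_subset_union_le_card_mult[OF mono sub])
    show "M \<union> (T \<inter> candidates (M, N, W))
      \<subseteq> (M \<union> (T \<inter> candidates (M, N', W - {e'\<in>W. fst e' = fst e}))) \<union> R"
      unfolding R_def candidates_def by auto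
    show "(M \<union> (T \<inter> candidates (M, N', W - {e'\<in>W. fst e' = fst e}))) \<union> R \<subseteq> E"
      using assms(1) T(1) unfolding R_def by auto
    show "finite R" using finite_matching unfolding R_def by simp
    show "0 \<le> marginal f M e" using marginal_nonneg[OF mono assms(1) \<open>e \<in> E\<close>] .
  qed (use max \<open>card R \<le> 1\<close> in \<open>auto simp: R_def\<close>)
  then show ?thesis by simp
qed

lemma potential_loss_accepted:
  assumes "M \<subseteq> E" "W \<subseteq> E" and e: "e \<in> candidates (M, N, W)"
    and max: "\<forall>u\<in>candidates (M, N, W). marginal f M u \<le> marginal f M e"
  shows "f (M \<union> (T \<inter> candidates (M, N, W)))
    \<le> f (insert e M \<union> (T \<inter> candidates (insert e M, N', W - {e'\<in>W. fst e' = fst e})))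
       + 2 * marginal f M e"
proof -
  let ?X = "insert e M \<union> (T \<inter> candidates (insert e M, N', W - {e'\<in>W. fst e' = fst e}))"
  define R where "R = {u \<in> T \<inter> candidates (M, N, W). fst u = fst e \<or> snd u = snd e}"
  have "card R \<le> card {u\<in>T. fst u = fst e \<or> snd u = snd e}"
    unfolding R_def by (rule card_mono) (use finite_matching in auto)
  then have "card R \<le> 2"
    using card_matching_incident_le(2)[OF T(2) finite_matching, of "fst e" "snd e"] by linarith
  have "e \<in> E" using e assms(2) unfolding candidates_def by auto
  have "f (M \<union> (T \<inter> candidates (M, N, W))) \<le> f ?X + real 2 * marginal f M e"
  proof (rule submodular_subset_union_le_card_mult[OF mono sub])
    show "M \<union> (T \<inter> candidates (M, N, W)) \<subseteq> ?X \<union> R"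
    proof
      fix u assume u: "u \<in> M \<union> (T \<inter> candidates (M, N, W))"
      show "u \<in> ?X \<union> R"
      proof (cases "u \<in> M \<or> fst u = fst e \<or> snd u = snd e")
        case True
        then show ?thesis using u unfolding R_def by auto
      next
        case False
        have "is_matching (insert u M)" "is_matching (insert e M)"
          using u e False unfolding candidates_def by auto
        then have "is_matching (insert u (insert e M))"
          using False by (intro is_matching_insert_insert) auto
        then show ?thesis using u False unfolding candidates_def by auto
      qed
    qed
    show "?X \<union> R \<subseteq> E" using assms(1) T(1) \<open>e \<in> E\<close> unfolding R_def by auto
    show "finite R" using finite_matching unfolding R_def by simp
    show "0 \<le> marginal f M e" using marginal_nonneg[OF mono assms(1) \<open>e \<in> E\<close>] .
  qed (use max \<open>card R \<le> 2\<close> in \<open>auto simp: R_def\<close>)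
  then show ?thesis by simp
qed

lemma potential_sim2_step:
  assumes choice: "\<forall>S. S \<subseteq> E \<and> S \<noteq> {} \<longrightarrow> tb S \<in> S"
    and p: "0 < p" "p < 1" and "M \<subseteq> E" "W \<subseteq> E"
  shows "potential f T (1 + 1/p) (M, N, W)
    \<le> measure_pmf.expectation (sim2_step f tb p (M, N, W)) (potential f T (1 + 1/p))"
proof (cases "candidates (M, N, W) = {}")
  case True
  then show ?thesis by (simp add: sim2_step_stop)
next
  case False
  have "finite W" using \<open>W \<subseteq> E\<close> \<open>finite E\<close> finite_subset by blast
  then obtain e where e: "e \<in> candidates (M, N, W)"
    and max: "\<forall>u\<in>candidates (M, N, W). marginal f M u \<le> marginal f M e"
    and step: "sim2_step f tb p (M, N, W) =
      map_pmf (\<lambda>b. if b then (insert e M, N, W - {e'\<in>W. fst e' = fst e})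
                        else (M, insert e N, W - {e'\<in>W. fst e' = fst e}))
        (bernoulli_pmf p)"
    by (rule sim2_step_active[OF choice \<open>W \<subseteq> E\<close> _ False])
  define W' where "W' = W - {e'\<in>W. fst e' = fst e}"
  define g where "g = marginal f M e"
  define a where "a = 1 + 1/p"
  let ?A = "T \<inter> candidates (M, N, W)"
  let ?A\<^sub>a = "T \<inter> candidates (insert e M, N, W')"
  let ?A\<^sub>r = "T \<inter> candidates (M, insert e N, W')"
  have accepted: "f (M \<union> ?A) \<le> f (insert e M \<union> ?A\<^sub>a) + 2 * g"
    using potential_loss_accepted[OF \<open>M \<subseteq> E\<close> \<open>W \<subseteq> E\<close> e max] unfolding W'_def g_def .
  have rejected: "f (M \<union> ?A) \<le> f (M \<union> ?A\<^sub>r) + g"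
    using potential_loss_rejected[OF \<open>M \<subseteq> E\<close> \<open>W \<subseteq> E\<close> e max] unfolding W'_def g_def .
  \<comment> \<open>a = 1 + 1/p makes the expected gain p a g = (1 + p) g pay exactly for the
    expected loss 2 p g + (1 - p) g\<close>
  have "measure_pmf.expectation (sim2_step f tb p (M, N, W)) (potential f T a)
      = p * (a * (f M + g) + f (insert e M \<union> ?A\<^sub>a)) + (1 - p) * (a * f M + f (M \<union> ?A\<^sub>r))"
    unfolding step W'_def[symmetric] using p by (simp add: potential_def g_def marginal_def)
  also have "\<dots> \<ge> p * (a * (f M + g) + f (M \<union> ?A) - 2 * g) + (1 - p) * (a * f M + f (M \<union> ?A) - g)"
    using accepted rejected p by (intro add_mono mult_left_mono) auto
  also have "p * (a * (f M + g) + f (M \<union> ?A) - 2 * g) + (1 - p) * (a * f M + f (M \<union> ?A) - g)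
      = potential f T a (M, N, W)"
    using p unfolding a_def potential_def by (simp add: field_simps)
  finally show ?thesis unfolding a_def .
qed

lemma potential_sim2_iter:
  assumes choice: "\<forall>S. S \<subseteq> E \<and> S \<noteq> {} \<longrightarrow> tb S \<in> S" and p: "0 < p" "p < 1"
  shows "potential f T (1 + 1/p) ({}, {}, E)
    \<le> measure_pmf.expectation (sim2_iter f tb p k ({}, {}, E)) (potential f T (1 + 1/p))"
proof (induction k)
  case 0
  then show ?case by simp
next
  case (Suc k)
  have "measure_pmf.expectation (sim2_iter f tb p k ({}, {}, E)) (potential f T (1 + 1/p))
      \<le> measure_pmf.expectation (sim2_iter f tb p (Suc k) ({}, {}, E)) (potential f T (1 + 1/p))"
    unfolding sim2_iter_Suc
  proof (rule expectation_bind_pmf_mono)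
    fix s assume "s \<in> set_pmf (sim2_iter f tb p k ({}, {}, E))"
    moreover obtain M N W where "s = (M, N, W)" by (cases s)
    ultimately have "M \<subseteq> E" "W \<subseteq> E"
      using sim2_iter_support[OF choice \<open>finite E\<close>] by blast+
    then show "potential f T (1 + 1/p) s
      \<le> measure_pmf.expectation (sim2_step f tb p s) (potential f T (1 + 1/p))"
      unfolding \<open>s = (M, N, W)\<close> using potential_sim2_step[OF choice p] by blast
  qed (simp_all add: finite_set_pmf_sim2_iter finite_set_pmf_sim2_step)
  then show ?case using Suc.IH by linarith
qed

lemma matching_le_expectation_simulate2_M:
  assumes choice: "\<forall>S. S \<subseteq> E \<and> S \<noteq> {} \<longrightarrow> tb S \<in> S" and p: "0 < p" "p < 1"
    and nonneg: "\<forall>A. A \<subseteq> E \<longrightarrow> f A \<ge> 0"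
  shows "f T \<le> (2 + 1/p) * measure_pmf.expectation (simulate2_M E f tb p) f"
proof -
  have "T \<inter> candidates ({}, {}, E) = T"
    using T(1) unfolding candidates_def is_matching_def by auto
  then have "f T \<le> potential f T (1 + 1/p) ({}, {}, E)"
    using nonneg p unfolding potential_def by simp
  also have "\<dots> \<le> measure_pmf.expectation (sim2_run E f tb p) (potential f T (1 + 1/p))"
    unfolding sim2_run_eq_iter by (rule potential_sim2_iter[OF choice p])
  also have "\<dots> = measure_pmf.expectation (sim2_run E f tb p) (\<lambda>s. (2 + 1/p) * f (fst s))"
  proof (intro integral_cong_AE AE_pmfI)
    fix s assume "s \<in> set_pmf (sim2_run E f tb p)"
    moreover obtain M N W where "s = (M, N, W)" by (cases s)
    ultimately have "candidates s = {}"
      using sim2_run_terminated[OF choice \<open>finite E\<close>] by blast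
    then show "potential f T (1 + 1/p) s = (2 + 1/p) * f (fst s)"
      unfolding potential_def by (simp add: algebra_simps)
  qed simp_all
  also have "\<dots> = (2 + 1/p) * measure_pmf.expectation (simulate2_M E f tb p) f"
    unfolding simulate2_M_def integral_map_pmf by simp
  finally show ?thesis .
qed

end

theorem lemma10:
  fixes L :: "'l set" and R :: "'r set" and E :: "('l \<times> 'r) set"
    and f :: "('l \<times> 'r) set \<Rightarrow> real" and tb :: "('l \<times> 'r) set \<Rightarrow> 'l \<times> 'r"
    and p :: real
  assumes "finite L" and "finite R" and "E \<subseteq> L \<times> R"
    and "\<forall>A. A \<subseteq> E \<longrightarrow> f A \<ge> 0"
    and "monotone_set_fun f E"
    and "submodular f E"
    and "0 < p" and "p < 1"
    and "\<forall>S. S \<subseteq> E \<and> S \<noteq> {} \<longrightarrow> tb S \<in> S"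
  shows "measure_pmf.expectation (simulate2_M E f tb p) f \<ge> p / 3 * OPT E f"
proof -
  have "finite E" using assms(1-3) finite_subset by blast
  then obtain T where "T \<subseteq> E" "is_matching T" "f T = OPT E f" by (rule OPT_attained)
  define X where "X = measure_pmf.expectation (simulate2_M E f tb p) f"
  have "OPT E f \<le> (2 + 1/p) * X"
    using matching_le_expectation_simulate2_M
      [OF assms(5,6) \<open>finite E\<close> \<open>T \<subseteq> E\<close> \<open>is_matching T\<close> assms(9,7,8,4)]
    unfolding X_def \<open>f T = OPT E f\<close> .
  moreover have "0 \<le> X"
    unfolding X_def simulate2_M_def integral_map_pmf
    using sim2_run_terminated[OF assms(9) \<open>finite E\<close>] assms(4)
    by (intro integral_nonneg_AE AE_pmfI) (metis prod.collapse)
  ultimately have "p / 3 * OPT E f \<le> p / 3 * ((2 + 1/p) * X)"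
    using assms(7) by (intro mult_left_mono) auto
  also have "\<dots> = (2 * p + 1) / 3 * X" using assms(7) by (simp add: field_simps)
  also have "\<dots> \<le> X" using \<open>0 \<le> X\<close> assms(7,8) by (intro mult_left_le_one_le) auto
  finally show ?thesis unfolding X_def .
qed

end
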